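(* Let $x\in\mathbb{R}^m$, let $Y$ be a finite set of classes, let $f:\mathbb{R}^m\to Y$ be a (measurable) classifier, and let $\{\psi_\delta\}_{\delta\in(0,\infty)^n}$, $\psi_\delta:\mathbb{R}^m\to\mathbb{R}^m$, be a multiplicatively composable transformation. Let $\beta=(\beta_1,\dots,\beta_n)^T$ where $\beta_1,\dots,\beta_n$ are independent and identically distributed with $\beta_i\sim\mathrm{Rayleigh}(\sigma)$, $\sigma>0$, and define $g(x)=\arg\max_{c\in Y}\mathbb{P}_\beta\big(f(\psi_\beta(x))=c\big)$. Let $c_A\in Y$ and put $$p_A=\mathbb{P}_\beta\big(f(\psi_\beta(x))=c_A\big),\qquad p_B=\max_{c_B\neq c_A}\mathbb{P}_\beta\big(f(\psi_\beta(x))=c_B\big),$$ and suppose $p_A\ge\underline{p_A}>\overline{p_B}\ge p_B$. For $\gamma=(\gamma_1,\dots,\gamma_n)\in(0,\infty)^n$ let $r=r(\gamma)$ and $\theta=\theta(\gamma)$ be the unique solutions of $$\mathbb{P}\Big(\sum_{i=1}^n(1-\gamma_i^{-2})\beta_i^2\le r\Big)=\underline{p_A},\qquad \mathbb{P}\Big(\sum_{i=1}^n(1-\gamma_i^{-2})\beta_i^2\ge \theta\Big)=\overline{p_B},$$ and let $\Omega$ be the set of all $\gamma\in(0,\infty)^n$ satisfying $$\mathbb{P}\Big(\sum_{i=1}^n(\gamma_i^{2}-1)\beta_i^2\le r\Big)>\mathbb{P}\Big(\sum_{i=1}^n(\gamma_i^{2}-1)\beta_i^2\ge \theta\Big).$$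 Then $g(\psi_\gamma(x))=c_A$ for all $\gamma\in\Omega$.
   Context: A parameterized family of maps $\psi_\delta:X\to X$, $\delta\in\mathcal{B}\subset\mathbb{R}^n$, is called multiplicatively composable if $\psi_\delta\circ\psi_\theta=\psi_{\delta\cdot\theta}$ for all $\delta,\theta\in\mathcal{B}$, where $\delta\cdot\theta\in\mathcal{B}$ denotes the element-wise product. A random variable $\zeta$ has the Rayleigh distribution with scale $\sigma>0$, written $\zeta\sim\mathrm{Rayleigh}(\sigma)$, if it has density $p_\zeta(z)=\sigma^{-2}z\,e^{-z^2/(2\sigma^2)}$ for $z\ge 0$ (and $0$ for $z<0$). *)

theory Defs
  imports "HOL-Probability.Probability"
begin

text \<open>Multiplicatively composable family of maps indexed by \<open>(0,\<infinity>)^n\<close>,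
  parameters represented as functions on a finite index type \<open>'n\<close>;
  element-wise product is \<open>\<lambda>i. \<delta> i * \<theta> i\<close>.\<close>
definition pos_params :: "('n \<Rightarrow> real) set" where
  "pos_params = {\<delta>. \<forall>i. \<delta> i > 0}"

definition mult_composable :: "(('n \<Rightarrow> real) \<Rightarrow> 'a \<Rightarrow> 'a) \<Rightarrow> bool" where
  "mult_composable \<psi> \<longleftrightarrow>
     (\<forall>\<delta>\<in>pos_params. \<forall>\<theta>\<in>pos_params. \<psi> \<delta> \<circ> \<psi> \<theta> = \<psi> (\<lambda>i. \<delta> i * \<theta> i))"

definition rayleigh_density :: "real \<Rightarrow> real \<Rightarrow> real" where
  "rayleigh_density \<sigma> z = (if z \<ge> 0 then z / \<sigma>\<^sup>2 * exp (- z\<^sup>2 / (2 * \<sigma>\<^sup>2)) else 0)"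

definition rayleigh :: "real \<Rightarrow> real measure" where
  "rayleigh \<sigma> = density lborel (\<lambda>z. ennreal (rayleigh_density \<sigma> z))"

definition rayleigh_vec :: "real \<Rightarrow> ('n::finite \<Rightarrow> real) measure" where
  "rayleigh_vec \<sigma> = PiM UNIV (\<lambda>_. rayleigh \<sigma>)"

definition class_prob ::
  "real \<Rightarrow> ('a \<Rightarrow> 'y) \<Rightarrow> (('n::finite \<Rightarrow> real) \<Rightarrow> 'a \<Rightarrow> 'a) \<Rightarrow> 'a \<Rightarrow> 'y \<Rightarrow> real" where
  "class_prob \<sigma> f \<psi> x c = measure (rayleigh_vec \<sigma>) {b \<in> space (rayleigh_vec \<sigma>). f (\<psi> b x) = c}"

definition smoothed ::
  "real \<Rightarrow> ('a \<Rightarrow> 'y) \<Rightarrow> (('n::finite \<Rightarrow> real) \<Rightarrow> 'a \<Rightarrow> 'a) \<Rightarrow> 'a \<Rightarrow> 'y" where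
  "smoothed \<sigma> f \<psi> x = arg_max (class_prob \<sigma> f \<psi> x) (\<lambda>_. True)"

end

(*
  By multiplicative composability, psi_beta (psi_gamma x) = psi_(gamma beta) x almost surely, and
  gamma beta has independent Rayleigh(gamma_i sigma) components. The density of its law with
  respect to that of beta is an increasing function of T(beta) = sum_i (1 - gamma_i^-2) beta_i^2,
  so by the Neyman-Pearson lemma class c_A has probability at least that of {T <= r} under the
  law of gamma beta, and every other class at most that of {T >= theta}. Under the law of
  gamma beta these two events have the probabilities that {sum_i (gamma_i^2 - 1) beta_i^2 <= r}
  and {... >= theta} have under the law of beta, and the defining inequality of Omega separates them.
*)

theory Submission
  imports Defs
begin

lemma distr_PiM_componentwise:
  fixes M :: "'i::finite \<Rightarrow> 'a measure" and M' :: "'i \<Rightarrow> 'b measure"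
  assumes "product_prob_space M"
    and f_meas: "\<And>i. f i \<in> M i \<rightarrow>\<^sub>M M' i"
  shows "distr (PiM UNIV M) (PiM UNIV M') (\<lambda>\<omega> i. f i (\<omega> i))
       = PiM UNIV (\<lambda>i. distr (M i) (M' i) (f i))"
proof -
  interpret M: product_prob_space M by fact
  interpret D: product_prob_space "\<lambda>i. distr (M i) (M' i) (f i)"
    using f_meas by (intro product_prob_spaceI M.M.prob_space_distr) auto
  have f_PiM_meas: "(\<lambda>\<omega> i. f i (\<omega> i)) \<in> PiM UNIV M \<rightarrow>\<^sub>M PiM UNIV M'"
  proof (rule measurable_PiM_single')
    show "(\<lambda>\<omega>. f i (\<omega> i)) \<in> PiM UNIV M \<rightarrow>\<^sub>M M' i" for i
      using measurable_compose[OF measurable_component_singleton[of i UNIV M] f_meas[of i]] by simp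
  qed (auto simp: space_PiM intro: measurable_space[OF f_meas])
  show ?thesis
  proof (rule D.PiM_eqI)
    fix A assume A: "\<And>i. i \<in> UNIV \<Longrightarrow> A i \<in> sets (distr (M i) (M' i) (f i))"
    have "(\<lambda>\<omega> i. f i (\<omega> i)) -` Pi\<^sub>E UNIV A \<inter> space (PiM UNIV M)
        = Pi\<^sub>E UNIV (\<lambda>i. f i -` A i \<inter> space (M i))"
      by (auto simp: space_PiM PiE_iff)
    then have "emeasure (distr (PiM UNIV M) (PiM UNIV M') (\<lambda>\<omega> i. f i (\<omega> i))) (Pi\<^sub>E UNIV A)
        = emeasure (PiM UNIV M) (Pi\<^sub>E UNIV (\<lambda>i. f i -` A i \<inter> space (M i)))"
      using A f_PiM_meas by (subst emeasure_distr) (auto intro!: sets_PiM_I_finite)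
    also have "\<dots> = (\<Prod>i\<in>UNIV. emeasure (distr (M i) (M' i) (f i)) (A i))"
      using A f_meas by (subst M.emeasure_PiM) (auto intro!: prod.cong simp: emeasure_distr)
    finally show "emeasure (distr (PiM UNIV M) (PiM UNIV M') (\<lambda>\<omega> i. f i (\<omega> i))) (Pi\<^sub>E UNIV A)
        = (\<Prod>i\<in>UNIV. emeasure (distr (M i) (M' i) (f i)) (A i))" .
  qed (simp_all, intro sets_PiM_cong, simp_all)
qed

lemma PiM_density:
  fixes M :: "'i::finite \<Rightarrow> 'a measure" and \<rho> :: "'i \<Rightarrow> 'a \<Rightarrow> ennreal"
  assumes "product_sigma_finite M" "product_sigma_finite (\<lambda>i. density (M i) (\<rho> i))"
    and \<rho>_meas: "\<And>i. \<rho> i \<in> borel_measurable (M i)"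
  shows "PiM UNIV (\<lambda>i. density (M i) (\<rho> i)) = density (PiM UNIV M) (\<lambda>\<omega>. \<Prod>i\<in>UNIV. \<rho> i (\<omega> i))"
proof -
  interpret M: product_sigma_finite M by fact
  interpret D: product_sigma_finite "\<lambda>i. density (M i) (\<rho> i)" by fact
  show ?thesis
  proof (rule D.PiM_eqI[symmetric])
    fix A assume A: "\<And>i. i \<in> UNIV \<Longrightarrow> A i \<in> sets (density (M i) (\<rho> i))"
    then have A_sets: "\<And>i. A i \<in> sets (M i)" by simp
    have indicator_PiE: "indicator (Pi\<^sub>E UNIV A) \<omega> = (\<Prod>i\<in>UNIV. indicator (A i) (\<omega> i) :: ennreal)"
      for \<omega> :: "'i \<Rightarrow> 'a"
      by (cases "\<forall>i. \<omega> i \<in> A i") (auto simp: indicator_def PiE_iff)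
    have "emeasure (density (PiM UNIV M) (\<lambda>\<omega>. \<Prod>i\<in>UNIV. \<rho> i (\<omega> i))) (Pi\<^sub>E UNIV A)
        = (\<integral>\<^sup>+\<omega>. (\<Prod>i\<in>UNIV. \<rho> i (\<omega> i) * indicator (A i) (\<omega> i)) \<partial>PiM UNIV M)"
      using A_sets \<rho>_meas
      by (subst emeasure_density) (auto intro!: sets_PiM_I_finite simp: indicator_PiE prod.distrib)
    also have "\<dots> = (\<Prod>i\<in>UNIV. \<integral>\<^sup>+z. \<rho> i z * indicator (A i) z \<partial>M i)"
      using A_sets \<rho>_meas by (subst M.product_nn_integral_prod) auto
    also have "\<dots> = (\<Prod>i\<in>UNIV. emeasure (density (M i) (\<rho> i)) (A i))"
      using A_sets \<rho>_meas by (auto intro!: prod.cong simp: emeasure_density)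
    finally show "emeasure (density (PiM UNIV M) (\<lambda>\<omega>. \<Prod>i\<in>UNIV. \<rho> i (\<omega> i))) (Pi\<^sub>E UNIV A)
        = (\<Prod>i\<in>UNIV. emeasure (density (M i) (\<rho> i)) (A i))" .
  qed (simp_all, intro sets_PiM_cong, simp_all)
qed

lemma neyman_pearson_diff:
  fixes \<rho> :: "'a \<Rightarrow> ennreal" and t :: real
  assumes "finite_measure M" "finite_measure (density M \<rho>)"
    and [measurable]: "\<rho> \<in> borel_measurable M" "X \<in> sets M" "Y \<in> sets M"
    and "t \<ge> 0"
    and above: "\<And>x. x \<in> X - Y \<Longrightarrow> ennreal t \<le> \<rho> x"
    and below: "\<And>x. x \<in> Y - X \<Longrightarrow> \<rho> x \<le> ennreal t"
  shows "t * (measure M X - measure M Y) \<le> measure (density M \<rho>) X - measure (density M \<rho>) Y"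
proof -
  interpret M: finite_measure M by fact
  interpret N: finite_measure "density M \<rho>" by fact
  have "ennreal t * emeasure M (X - Y) = (\<integral>\<^sup>+x. ennreal t * indicator (X - Y) x \<partial>M)"
    by (simp add: nn_integral_cmult_indicator)
  also have "\<dots> \<le> (\<integral>\<^sup>+x. \<rho> x * indicator (X - Y) x \<partial>M)"
    using above by (intro nn_integral_mono) (auto split: split_indicator)
  also have "\<dots> = emeasure (density M \<rho>) (X - Y)"
    by (simp add: emeasure_density)
  finally have XY: "t * measure M (X - Y) \<le> measure (density M \<rho>) (X - Y)"
    using \<open>t \<ge> 0\<close> by (simp add: M.emeasure_eq_measure N.emeasure_eq_measure ennreal_mult'[symmetric])
  have "emeasure (density M \<rho>) (Y - X) = (\<integral>\<^sup>+x. \<rho> x * indicator (Y - X) x \<partial>M)"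
    by (simp add: emeasure_density)
  also have "\<dots> \<le> (\<integral>\<^sup>+x. ennreal t * indicator (Y - X) x \<partial>M)"
    using below by (intro nn_integral_mono) (auto split: split_indicator)
  also have "\<dots> = ennreal t * emeasure M (Y - X)"
    by (simp add: nn_integral_cmult_indicator)
  finally have YX: "measure (density M \<rho>) (Y - X) \<le> t * measure M (Y - X)"
    using \<open>t \<ge> 0\<close> by (simp add: M.emeasure_eq_measure N.emeasure_eq_measure ennreal_mult'[symmetric])
  have "X = (X \<inter> Y) \<union> (X - Y)" "Y = (X \<inter> Y) \<union> (Y - X)" by blast+
  then have "measure M X = measure M (X \<inter> Y) + measure M (X - Y)"
    "measure M Y = measure M (X \<inter> Y) + measure M (Y - X)"
    "measure (density M \<rho>) X = measure (density M \<rho>) (X \<inter> Y) + measure (density M \<rho>) (X - Y)"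
    "measure (density M \<rho>) Y = measure (density M \<rho>) (X \<inter> Y) + measure (density M \<rho>) (Y - X)"
    by (metis Diff_disjoint Int_Diff_disjoint M.finite_measure_Union N.finite_measure_Union
        sets.Diff sets.Int sets_density \<open>X \<in> sets M\<close> \<open>Y \<in> sets M\<close> Int_commute)+
  with XY YX show ?thesis by (simp add: right_diff_distrib)
qed

lemma neyman_pearson_lower:
  fixes M :: "'a measure" and h :: "real \<Rightarrow> real" and T :: "'a \<Rightarrow> real"
  assumes "finite_measure M" "finite_measure (density M (\<lambda>x. ennreal (h (T x))))"
    and [measurable]: "T \<in> borel_measurable M" "A \<in> sets M"
    and "mono h" "\<And>t. 0 \<le> h t"
    and "measure M {x \<in> space M. T x \<le> r} \<le> measure M A"
  shows "measure (density M (\<lambda>x. ennreal (h (T x)))) {x \<in> space M. T x \<le> r}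
      \<le> measure (density M (\<lambda>x. ennreal (h (T x)))) A"
proof -
  have [measurable]: "h \<in> borel_measurable borel"
    using \<open>mono h\<close> by (rule borel_measurable_mono)
  have "A \<subseteq> space M" using sets.sets_into_space \<open>A \<in> sets M\<close> .
  then have "h r * (measure M A - measure M {x \<in> space M. T x \<le> r})
      \<le> measure (density M (\<lambda>x. ennreal (h (T x)))) A
        - measure (density M (\<lambda>x. ennreal (h (T x)))) {x \<in> space M. T x \<le> r}"
    using assms
    by (intro neyman_pearson_diff) (auto intro!: ennreal_leI monoD[OF \<open>mono h\<close>])
  moreover have "0 \<le> h r * (measure M A - measure M {x \<in> space M. T x \<le> r})"
    using assms by simp
  ultimately show ?thesis by linarith
qed

lemma neyman_pearson_upper:
  fixes M :: "'a measure" and h :: "real \<Rightarrow> real" and T :: "'a \<Rightarrow> real"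
  assumes "finite_measure M" "finite_measure (density M (\<lambda>x. ennreal (h (T x))))"
    and [measurable]: "T \<in> borel_measurable M" "A \<in> sets M"
    and "mono h" "\<And>t. 0 \<le> h t"
    and "measure M A \<le> measure M {x \<in> space M. \<theta> \<le> T x}"
  shows "measure (density M (\<lambda>x. ennreal (h (T x)))) A
      \<le> measure (density M (\<lambda>x. ennreal (h (T x)))) {x \<in> space M. \<theta> \<le> T x}"
proof -
  have [measurable]: "h \<in> borel_measurable borel"
    using \<open>mono h\<close> by (rule borel_measurable_mono)
  have "A \<subseteq> space M" using sets.sets_into_space \<open>A \<in> sets M\<close> .
  then have "h \<theta> * (measure M {x \<in> space M. \<theta> \<le> T x} - measure M A)
      \<le> measure (density M (\<lambda>x. ennreal (h (T x)))) {x \<in> space M. \<theta> \<le> T x}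
        - measure (density M (\<lambda>x. ennreal (h (T x)))) A"
    using assms
    by (intro neyman_pearson_diff) (auto intro!: ennreal_leI monoD[OF \<open>mono h\<close>])
  moreover have "0 \<le> h \<theta> * (measure M {x \<in> space M. \<theta> \<le> T x} - measure M A)"
    using assms by simp
  ultimately show ?thesis by linarith
qed

lemma rayleigh_density_measurable [measurable]: "rayleigh_density s \<in> borel_measurable borel"
  unfolding rayleigh_density_def by measurable

lemma sets_rayleigh [simp, measurable_cong]: "sets (rayleigh s) = sets borel"
  unfolding rayleigh_def by simp

lemma space_rayleigh [simp]: "space (rayleigh s) = UNIV"
  unfolding rayleigh_def by simp

lemma prob_space_rayleigh:
  assumes "s > 0"
  shows "prob_space (rayleigh s)"
proof
  have density_eq: "(\<lambda>z. ennreal (rayleigh_density s z))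
      = (\<lambda>z. ennreal (z / s\<^sup>2 * exp (- z\<^sup>2 / (2 * s\<^sup>2))) * indicator {0..} z)"
    by (auto simp: rayleigh_density_def fun_eq_iff indicator_def)
  have "(\<integral>\<^sup>+z. ennreal (z / s\<^sup>2 * exp (- z\<^sup>2 / (2 * s\<^sup>2))) * indicator {0..} z \<partial>lborel)
      = 0 - (- exp (- 0\<^sup>2 / (2 * s\<^sup>2)))"
  proof (rule nn_integral_FTC_atLeast)
    fix z :: real
    show "DERIV (\<lambda>z. - exp (- z\<^sup>2 / (2 * s\<^sup>2))) z :> z / s\<^sup>2 * exp (- z\<^sup>2 / (2 * s\<^sup>2))"
      using assms by (auto intro!: derivative_eq_intros simp: field_simps power2_eq_square)
    assume "0 \<le> z"
    then show "0 \<le> z / s\<^sup>2 * exp (- z\<^sup>2 / (2 * s\<^sup>2))" by auto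
  next
    show "((\<lambda>z. - exp (- z\<^sup>2 / (2 * s\<^sup>2))) \<longlongrightarrow> 0) at_top"
      using assms by real_asymp
  qed measurable
  then show "emeasure (rayleigh s) (space (rayleigh s)) = 1"
    unfolding rayleigh_def by (simp add: emeasure_density density_eq)
qed

lemma distr_rayleigh_scale:
  assumes "c > 0" "s > 0"
  shows "distr (rayleigh s) borel ((*) c) = rayleigh (c * s)"
proof (rule measure_eqI)
  fix A assume "A \<in> sets (distr (rayleigh s) borel ((*) c))"
  then have [measurable]: "A \<in> sets borel" by simp
  have "(*) c -` A \<in> sets borel"
    using measurable_sets[of "(*) c" borel borel A] by simp
  then have "emeasure (distr (rayleigh s) borel ((*) c)) A
      = (\<integral>\<^sup>+z. ennreal (rayleigh_density s z) * indicator A (c * z) \<partial>lborel)"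
    unfolding rayleigh_def
    by (subst emeasure_distr, simp_all, subst emeasure_density)
      (auto intro!: nn_integral_cong simp: indicator_def)
  also have "\<dots> = ennreal c * (\<integral>\<^sup>+z. ennreal (rayleigh_density (c * s) (0 + c * z))
                                      * indicator A (0 + c * z) \<partial>lborel)"
    using assms by (subst nn_integral_cmult[symmetric])
      (auto intro!: nn_integral_cong split: split_indicator
        simp: rayleigh_density_def ennreal_mult'[symmetric] power_mult_distrib field_simps
          power2_eq_square zero_le_mult_iff)
  also have "\<dots> = (\<integral>\<^sup>+z. ennreal (rayleigh_density (c * s) z) * indicator A z \<partial>lborel)"
    using assms by (subst nn_integral_real_affine[of _ c 0]) auto
  also have "\<dots> = emeasure (rayleigh (c * s)) A"
    unfolding rayleigh_def by (simp add: emeasure_density)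
  finally show "emeasure (distr (rayleigh s) borel ((*) c)) A = emeasure (rayleigh (c * s)) A" .
qed simp

lemma rayleigh_scale_eq_density:
  assumes "c > 0" "s > 0"
  shows "rayleigh (c * s)
    = density (rayleigh s) (\<lambda>z. ennreal (1 / c\<^sup>2 * exp ((1 - 1 / c\<^sup>2) * z\<^sup>2 / (2 * s\<^sup>2))))"
  unfolding rayleigh_def using assms
  by (subst density_density_eq)
    (auto intro!: arg_cong[where f="density lborel"] simp: fun_eq_iff rayleigh_density_def
      ennreal_mult'[symmetric] exp_add[symmetric] field_simps power_mult_distrib)

lemma space_rayleigh_vec [simp]: "space (rayleigh_vec s) = UNIV"
  unfolding rayleigh_vec_def by (simp add: space_PiM)

lemma sets_rayleigh_vec [measurable_cong]:
  "sets (rayleigh_vec s) = sets (PiM UNIV (\<lambda>_. borel :: real measure))"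
  unfolding rayleigh_vec_def by (intro sets_PiM_cong) auto

lemma product_prob_space_rayleigh:
  "(\<And>i. s i > 0) \<Longrightarrow> product_prob_space (\<lambda>i. rayleigh (s i))"
  by (intro product_prob_spaceI prob_space_rayleigh)

lemma prob_space_rayleigh_vec: "s > 0 \<Longrightarrow> prob_space (rayleigh_vec s)"
  unfolding rayleigh_vec_def by (intro prob_space_PiM prob_space_rayleigh)

lemma AE_rayleigh_vec_pos:
  assumes "s > 0"
  shows "AE b in rayleigh_vec s. \<forall>i. 0 < b i"
proof -
  have "AE z in rayleigh s. 0 < z"
    unfolding rayleigh_def
    by (subst AE_density) (auto simp: rayleigh_density_def le_less intro!: AE_I2)
  then have "AE b in rayleigh_vec s. \<forall>i\<in>UNIV. 0 < b i"
    unfolding rayleigh_vec_def using assms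
    by (intro AE_finite_allI AE_PiM_component prob_space_rayleigh) auto
  then show ?thesis by simp
qed

lemma distr_rayleigh_vec_scale:
  assumes "\<And>i. \<gamma> i > 0" "s > 0"
  shows "distr (rayleigh_vec s) (PiM UNIV (\<lambda>_. borel)) (\<lambda>b i. \<gamma> i * b i)
       = PiM UNIV (\<lambda>i. rayleigh (\<gamma> i * s))"
  using distr_PiM_componentwise[of "\<lambda>_. rayleigh s" "\<lambda>i. (*) (\<gamma> i)" "\<lambda>_. borel"] assms
  by (simp add: rayleigh_vec_def product_prob_space_rayleigh distr_rayleigh_scale)

lemma scale_measurable [measurable]:
  "(\<lambda>b i. \<gamma> i * b i) \<in> PiM UNIV (\<lambda>_. borel) \<rightarrow>\<^sub>M PiM UNIV (\<lambda>_. borel :: real measure)"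
  by (rule measurable_PiM_single') (auto simp: space_PiM)

definition weighted_sq_sum :: "('n::finite \<Rightarrow> real) \<Rightarrow> ('n \<Rightarrow> real) \<Rightarrow> real" where
  "weighted_sq_sum w b = (\<Sum>i\<in>UNIV. w i * (b i)\<^sup>2)"

lemma weighted_sq_sum_measurable [measurable]:
  "weighted_sq_sum w \<in> borel_measurable (PiM UNIV (\<lambda>_. borel))"
  unfolding weighted_sq_sum_def by measurable

lemma measure_rayleigh_scale_weighted_sq_sum:
  assumes \<gamma>: "\<And>i. \<gamma> i > 0" and "s > 0" and [measurable]: "A \<in> sets borel"
  shows "measure (PiM UNIV (\<lambda>i. rayleigh (\<gamma> i * s))) {b. weighted_sq_sum (\<lambda>i. 1 - 1 / (\<gamma> i)\<^sup>2) b \<in> A}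
       = measure (rayleigh_vec s) {b. weighted_sq_sum (\<lambda>i. (\<gamma> i)\<^sup>2 - 1) b \<in> A}"
proof -
  have scale: "weighted_sq_sum (\<lambda>i. 1 - 1 / (\<gamma> i)\<^sup>2) (\<lambda>i. \<gamma> i * b i)
      = weighted_sq_sum (\<lambda>i. (\<gamma> i)\<^sup>2 - 1) b" for b
    unfolding weighted_sq_sum_def using \<gamma>
    by (intro sum.cong) (auto simp: field_simps power_mult_distrib less_imp_neq[symmetric])
  have "{b. weighted_sq_sum (\<lambda>i. 1 - 1 / (\<gamma> i)\<^sup>2) b \<in> A} \<in> sets (PiM UNIV (\<lambda>_. borel))"
    using measurable_sets[OF weighted_sq_sum_measurable assms(3)] by (simp add: vimage_def space_PiM)
  moreover have "(\<lambda>b i. \<gamma> i * b i) \<in> rayleigh_vec s \<rightarrow>\<^sub>M PiM UNIV (\<lambda>_. borel)"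
    by measurable
  ultimately show ?thesis
    using assms by (simp add: distr_rayleigh_vec_scale[symmetric] measure_distr vimage_def scale)
qed

lemma rayleigh_scale_monotone_lr:
  assumes "\<And>i. \<gamma> i > 0" "s > 0"
  obtains h where "mono h" "\<And>t. 0 \<le> h t"
    "PiM UNIV (\<lambda>i. rayleigh (\<gamma> i * s))
       = density (rayleigh_vec s) (\<lambda>b. ennreal (h (weighted_sq_sum (\<lambda>i. 1 - 1 / (\<gamma> i)\<^sup>2) b)))"
proof
  let ?K = "\<Prod>i\<in>UNIV. 1 / (\<gamma> i)\<^sup>2"
  let ?lr = "\<lambda>i z. 1 / (\<gamma> i)\<^sup>2 * exp ((1 - 1 / (\<gamma> i)\<^sup>2) * z\<^sup>2 / (2 * s\<^sup>2))"
  show "mono (\<lambda>t. ?K * exp (t / (2 * s\<^sup>2)))"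
    by (intro monoI mult_left_mono) (auto intro: divide_right_mono prod_nonneg)
  show "0 \<le> ?K * exp (t / (2 * s\<^sup>2))" for t
    by (simp add: prod_nonneg)
  have density_lr: "density (rayleigh s) (\<lambda>z. ennreal (?lr i z)) = rayleigh (\<gamma> i * s)" for i
    using assms by (intro rayleigh_scale_eq_density[symmetric]) auto
  have "PiM UNIV (\<lambda>i. rayleigh (\<gamma> i * s)) = PiM UNIV (\<lambda>i. density (rayleigh s) (\<lambda>z. ennreal (?lr i z)))"
    by (simp only: density_lr)
  also have "\<dots> = density (rayleigh_vec s) (\<lambda>b. \<Prod>i\<in>UNIV. ennreal (?lr i (b i)))"
    unfolding rayleigh_vec_def
  proof (rule PiM_density)
    show "product_sigma_finite (\<lambda>_. rayleigh s)"
      "product_sigma_finite (\<lambda>i. density (rayleigh s) (\<lambda>z. ennreal (?lr i z)))"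
      unfolding density_lr using assms
      by (intro product_prob_space.axioms(1) product_prob_spaceI prob_space_rayleigh; simp)+
  qed simp
  also have "(\<lambda>b. \<Prod>i\<in>UNIV. ennreal (?lr i (b i)))
      = (\<lambda>b. ennreal (?K * exp (weighted_sq_sum (\<lambda>i. 1 - 1 / (\<gamma> i)\<^sup>2) b / (2 * s\<^sup>2))))"
    unfolding weighted_sq_sum_def sum_divide_distrib exp_sum[OF finite] prod.distrib[symmetric]
    by (simp add: prod_ennreal)
  finally show "PiM UNIV (\<lambda>i. rayleigh (\<gamma> i * s)) = density (rayleigh_vec s)
      (\<lambda>b. ennreal (?K * exp (weighted_sq_sum (\<lambda>i. 1 - 1 / (\<gamma> i)\<^sup>2) b / (2 * s\<^sup>2))))" .
qed

lemma class_event_sets: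
  assumes "f \<in> borel \<rightarrow>\<^sub>M count_space UNIV"
    and "\<And>z. (\<lambda>\<delta>. \<psi> \<delta> z) \<in> PiM UNIV (\<lambda>_. borel) \<rightarrow>\<^sub>M borel"
    and "g \<in> M \<rightarrow>\<^sub>M PiM UNIV (\<lambda>_. borel)"
  shows "{b \<in> space M. f (\<psi> (g b) x) = c} \<in> sets M"
proof -
  have "(\<lambda>b. f (\<psi> (g b) x)) \<in> M \<rightarrow>\<^sub>M count_space UNIV"
    using measurable_compose[OF measurable_compose[OF assms(3) assms(2)] assms(1)] .
  then show ?thesis
    unfolding pred_def[symmetric] by (rule pred_eq_const1) simp
qed

context
  fixes f :: "'a::topological_space \<Rightarrow> 'y" and \<psi> :: "('n::finite \<Rightarrow> real) \<Rightarrow> 'a \<Rightarrow> 'a"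
    and \<sigma> :: real and \<gamma> :: "'n \<Rightarrow> real"
  assumes f_meas: "f \<in> borel \<rightarrow>\<^sub>M count_space UNIV"
    and \<psi>_meas: "\<And>z. (\<lambda>\<delta>. \<psi> \<delta> z) \<in> PiM UNIV (\<lambda>_. borel) \<rightarrow>\<^sub>M borel"
    and comp: "mult_composable \<psi>"
    and \<sigma>_pos: "\<sigma> > 0"
    and \<gamma>_pos: "\<And>i. \<gamma> i > 0"
begin

lemma class_prob_comp:
  "class_prob \<sigma> f \<psi> (\<psi> \<gamma> x) c = measure (PiM UNIV (\<lambda>i. rayleigh (\<gamma> i * \<sigma>))) {b. f (\<psi> b x) = c}"
proof -
  have AE_comp: "AE b in rayleigh_vec \<sigma>. f (\<psi> b (\<psi> \<gamma> x)) = c \<longleftrightarrow> f (\<psi> (\<lambda>i. \<gamma> i * b i) x) = c"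
    using AE_rayleigh_vec_pos[OF \<sigma>_pos]
  proof eventually_elim
    case (elim b)
    \<comment> \<open>composability is only assumed on positive parameters, which \<open>\<beta>\<close> is almost surely\<close>
    then have "\<psi> b \<circ> \<psi> \<gamma> = \<psi> (\<lambda>i. b i * \<gamma> i)"
      using comp \<gamma>_pos unfolding mult_composable_def pos_params_def by simp
    then show ?case by (simp add: fun_eq_iff mult.commute)
  qed
  have events: "{b \<in> space (rayleigh_vec \<sigma>). f (\<psi> b y) = c} \<in> sets (rayleigh_vec \<sigma>)"
    "{b \<in> space (rayleigh_vec \<sigma>). f (\<psi> (\<lambda>i. \<gamma> i * b i) y) = c} \<in> sets (rayleigh_vec \<sigma>)"
    "{b \<in> space (PiM UNIV (\<lambda>_. borel)). f (\<psi> b y) = c} \<in> sets (PiM UNIV (\<lambda>_. borel))" for y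
    by (rule class_event_sets[OF f_meas \<psi>_meas],
        simp add: measurable_cong_sets[OF sets_rayleigh_vec refl])+
  have "class_prob \<sigma> f \<psi> (\<psi> \<gamma> x) c
      = measure (rayleigh_vec \<sigma>) {b \<in> space (rayleigh_vec \<sigma>). f (\<psi> (\<lambda>i. \<gamma> i * b i) x) = c}"
    unfolding class_prob_def using AE_comp events by (intro measure_eq_AE) auto
  also have "\<dots> = measure (distr (rayleigh_vec \<sigma>) (PiM UNIV (\<lambda>_. borel)) (\<lambda>b i. \<gamma> i * b i))
      {b \<in> space (PiM UNIV (\<lambda>_. borel)). f (\<psi> b x) = c}"
    using events(3) by (subst measure_distr) (auto simp: space_PiM intro!: arg_cong2[where f=measure])
  finally show ?thesis
    using \<gamma>_pos \<sigma>_pos by (simp add: distr_rayleigh_vec_scale space_PiM)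
qed

lemma class_prob_comp_lower:
  assumes "measure (rayleigh_vec \<sigma>) {b. weighted_sq_sum (\<lambda>i. 1 - 1 / (\<gamma> i)\<^sup>2) b \<le> r}
      \<le> class_prob \<sigma> f \<psi> x c"
  shows "measure (rayleigh_vec \<sigma>) {b. weighted_sq_sum (\<lambda>i. (\<gamma> i)\<^sup>2 - 1) b \<le> r}
      \<le> class_prob \<sigma> f \<psi> (\<psi> \<gamma> x) c"
proof -
  obtain h where "mono h" "\<And>t. 0 \<le> h t" and law: "PiM UNIV (\<lambda>i. rayleigh (\<gamma> i * \<sigma>))
      = density (rayleigh_vec \<sigma>) (\<lambda>b. ennreal (h (weighted_sq_sum (\<lambda>i. 1 - 1 / (\<gamma> i)\<^sup>2) b)))"
    by (rule rayleigh_scale_monotone_lr[of \<gamma> \<sigma>]) (use \<gamma>_pos \<sigma>_pos in auto)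
  have "measure (PiM UNIV (\<lambda>i. rayleigh (\<gamma> i * \<sigma>)))
        {b. weighted_sq_sum (\<lambda>i. 1 - 1 / (\<gamma> i)\<^sup>2) b \<le> r}
      \<le> measure (PiM UNIV (\<lambda>i. rayleigh (\<gamma> i * \<sigma>))) {b. f (\<psi> b x) = c}"
    using assms \<open>mono h\<close> \<open>\<And>t. 0 \<le> h t\<close> \<gamma>_pos \<sigma>_pos
      prob_space_PiM[of UNIV "\<lambda>i. rayleigh (\<gamma> i * \<sigma>)"] prob_space_rayleigh
    unfolding law class_prob_def
    by (intro neyman_pearson_lower[where M="rayleigh_vec \<sigma>", simplified])
      (auto intro: prob_space.finite_measure prob_space_rayleigh_vec
        class_event_sets[OF f_meas \<psi>_meas measurable_ident_sets[OF sets_rayleigh_vec], simplified])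
  then show ?thesis
    using measure_rayleigh_scale_weighted_sq_sum[of \<gamma> \<sigma> "{..r}"] \<gamma>_pos \<sigma>_pos
    by (simp add: class_prob_comp)
qed

lemma class_prob_comp_upper:
  assumes "class_prob \<sigma> f \<psi> x c
      \<le> measure (rayleigh_vec \<sigma>) {b. \<theta> \<le> weighted_sq_sum (\<lambda>i. 1 - 1 / (\<gamma> i)\<^sup>2) b}"
  shows "class_prob \<sigma> f \<psi> (\<psi> \<gamma> x) c
      \<le> measure (rayleigh_vec \<sigma>) {b. \<theta> \<le> weighted_sq_sum (\<lambda>i. (\<gamma> i)\<^sup>2 - 1) b}"
proof -
  obtain h where "mono h" "\<And>t. 0 \<le> h t" and law: "PiM UNIV (\<lambda>i. rayleigh (\<gamma> i * \<sigma>))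
      = density (rayleigh_vec \<sigma>) (\<lambda>b. ennreal (h (weighted_sq_sum (\<lambda>i. 1 - 1 / (\<gamma> i)\<^sup>2) b)))"
    by (rule rayleigh_scale_monotone_lr[of \<gamma> \<sigma>]) (use \<gamma>_pos \<sigma>_pos in auto)
  have "measure (PiM UNIV (\<lambda>i. rayleigh (\<gamma> i * \<sigma>))) {b. f (\<psi> b x) = c}
      \<le> measure (PiM UNIV (\<lambda>i. rayleigh (\<gamma> i * \<sigma>)))
        {b. \<theta> \<le> weighted_sq_sum (\<lambda>i. 1 - 1 / (\<gamma> i)\<^sup>2) b}"
    using assms \<open>mono h\<close> \<open>\<And>t. 0 \<le> h t\<close> \<gamma>_pos \<sigma>_pos
      prob_space_PiM[of UNIV "\<lambda>i. rayleigh (\<gamma> i * \<sigma>)"] prob_space_rayleigh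
    unfolding law class_prob_def
    by (intro neyman_pearson_upper[where M="rayleigh_vec \<sigma>", simplified])
      (auto intro: prob_space.finite_measure prob_space_rayleigh_vec
        class_event_sets[OF f_meas \<psi>_meas measurable_ident_sets[OF sets_rayleigh_vec], simplified])
  then show ?thesis
    using measure_rayleigh_scale_weighted_sq_sum[of \<gamma> \<sigma> "{\<theta>..}"] \<gamma>_pos \<sigma>_pos
    by (simp add: class_prob_comp)
qed

lemma smoothed_comp_eq:
  assumes "measure (rayleigh_vec \<sigma>) {b. weighted_sq_sum (\<lambda>i. 1 - 1 / (\<gamma> i)\<^sup>2) b \<le> r}
      \<le> class_prob \<sigma> f \<psi> x cA"
    and "\<And>c. c \<noteq> cA \<Longrightarrow> class_prob \<sigma> f \<psi> x c
      \<le> measure (rayleigh_vec \<sigma>) {b. \<theta> \<le> weighted_sq_sum (\<lambda>i. 1 - 1 / (\<gamma> i)\<^sup>2) b}"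
    and "measure (rayleigh_vec \<sigma>) {b. \<theta> \<le> weighted_sq_sum (\<lambda>i. (\<gamma> i)\<^sup>2 - 1) b}
      < measure (rayleigh_vec \<sigma>) {b. weighted_sq_sum (\<lambda>i. (\<gamma> i)\<^sup>2 - 1) b \<le> r}"
  shows "smoothed \<sigma> f \<psi> (\<psi> \<gamma> x) = cA"
proof -
  have "class_prob \<sigma> f \<psi> (\<psi> \<gamma> x) c < class_prob \<sigma> f \<psi> (\<psi> \<gamma> x) cA" if "c \<noteq> cA" for c
  proof -
    have "class_prob \<sigma> f \<psi> (\<psi> \<gamma> x) c
        \<le> measure (rayleigh_vec \<sigma>) {b. \<theta> \<le> weighted_sq_sum (\<lambda>i. (\<gamma> i)\<^sup>2 - 1) b}"
      using assms(2)[OF that] by (rule class_prob_comp_upper)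
    also have "\<dots> < measure (rayleigh_vec \<sigma>) {b. weighted_sq_sum (\<lambda>i. (\<gamma> i)\<^sup>2 - 1) b \<le> r}"
      by (fact assms(3))
    also have "\<dots> \<le> class_prob \<sigma> f \<psi> (\<psi> \<gamma> x) cA"
      using assms(1) by (rule class_prob_comp_lower)
    finally show ?thesis .
  qed
  then show ?thesis
    unfolding smoothed_def arg_max_def is_arg_max_def
    by (intro some_equality) (auto dest: less_asym)
qed

end

theorem theorem2:
  fixes x :: "real ^ 'm"
    and f :: "real ^ 'm \<Rightarrow> 'y::finite"
    and \<psi> :: "('n::finite \<Rightarrow> real) \<Rightarrow> real ^ 'm \<Rightarrow> real ^ 'm"
    and \<sigma> pA_low pB_up :: real
    and cA :: 'y
  assumes f_meas: "f \<in> borel \<rightarrow>\<^sub>M count_space UNIV"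
    and \<psi>_meas: "\<And>z. (\<lambda>\<delta>. \<psi> \<delta> z) \<in> PiM UNIV (\<lambda>_. borel) \<rightarrow>\<^sub>M borel"
    and comp: "mult_composable \<psi>"
    and \<sigma>_pos: "\<sigma> > 0"
    and pA: "class_prob \<sigma> f \<psi> x cA \<ge> pA_low"
    and gap: "pA_low > pB_up"
    and pB: "\<forall>cB. cB \<noteq> cA \<longrightarrow> class_prob \<sigma> f \<psi> x cB \<le> pB_up"
  shows "\<forall>\<gamma>\<in>pos_params. \<forall>r \<theta>.
     measure (rayleigh_vec \<sigma>) {b \<in> space (rayleigh_vec \<sigma>).
        (\<Sum>i\<in>UNIV. (1 - 1 / (\<gamma> i)\<^sup>2) * (b i)\<^sup>2) \<le> r} = pA_low
   \<and> measure (rayleigh_vec \<sigma>) {b \<in> space (rayleigh_vec \<sigma>).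
        (\<Sum>i\<in>UNIV. (1 - 1 / (\<gamma> i)\<^sup>2) * (b i)\<^sup>2) \<ge> \<theta>} = pB_up
   \<and> measure (rayleigh_vec \<sigma>) {b \<in> space (rayleigh_vec \<sigma>).
        (\<Sum>i\<in>UNIV. ((\<gamma> i)\<^sup>2 - 1) * (b i)\<^sup>2) \<le> r}
     > measure (rayleigh_vec \<sigma>) {b \<in> space (rayleigh_vec \<sigma>).
        (\<Sum>i\<in>UNIV. ((\<gamma> i)\<^sup>2 - 1) * (b i)\<^sup>2) \<ge> \<theta>}
   \<longrightarrow> smoothed \<sigma> f \<psi> (\<psi> \<gamma> x) = cA"
  by (intro ballI allI impI, elim conjE, rule smoothed_comp_eq[OF f_meas \<psi>_meas comp \<sigma>_pos])
    (simp_all add: pos_params_def weighted_sq_sum_def pA pB)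

thm_deps theorem2

end
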